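(* Let $n,m,n_f,\ell\in\mathbb{N}$, let $0\leq w<1$ be a number representable with $n$ bits of which the first $m$ are its integer part, and let $f\in[0,1]$ be given with $n_f$ bits after the binary point. Then the value $\hat{t}$ returned by Algorithm FractionalPower2$(w,f,n,m,n_f,\ell)$ (described in the context), which performs its final arithmetic with $b=\max\{n,n_f,\lceil 2\ell+6m+2\ln n_f\rceil,40\}$ bits after the binary point, satisfies $$|\hat{t}-w^f|\leq\frac{1}{2^{\ell-3}}.$$
   Context: Fixed precision representation: a number $w\ge 0$ "given by $n$ bits of which the first $m$ correspond to its integer part" means $w=\sum_{j=m-n}^{m-1} w^{(j)}2^j$ with $w^{(j)}\in\{0,1\}$. For $x\geq 0$, "truncating $x$ to $b$ bits after the binary point" means replacing $x$ by $\lfloor 2^b x\rfloor/2^b$. All arithmetic inside a step is performed exactly; only the stated truncations introduce error. For $c\ge 0$, $\{c\}=c-\lfloor c\rfloor$. Algorithm INV$(w,n,m,b)$ (input $w\ge1$): if $w=1$ return $1$. Otherwise let $p\in\mathbb{N}$ with $2^p>w\geq 2^{p-1}$, $\hat{x}_0=2^{-p}$, $s=\lceil\log_2 b\rceil$; for $i=1,\dots,s$ compute exactly $x_i=-w\hat{x}_{i-1}^2+2\hat{x}_{i-1}$ and let $\hat{x}_i$ be $x_i$ truncated to $b$ bits. Return $\hat{x}_s$. Algorithm SQRT$(w,n,m,b)$ (input $w\geq 1$): if $w=1$, return $1$. Otherwise compute $\hat{x}_s$ exactly as in the loop of INV$(w,n,m,b)$ (with $s=\lceil\log_2 b\rceil$);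 let $q\in\mathbb{N}$ with $2^{1-q}>\hat{x}_s\geq 2^{-q}$ and set $\hat{y}_0=2^{\lfloor (q-1)/2\rfloor}$; for $j=1,\dots,s$ compute exactly $y_j=\frac12(3\hat{y}_{j-1}-\hat{x}_s\hat{y}_{j-1}^3)$ and let $\hat{y}_j$ be $y_j$ truncated to $b$ bits. Return $\hat{y}_s$. Algorithm PowerOf2Roots$(w,k,n,m,b)$: set $\hat{z}_1=$ SQRT$(w,n,m,b)$; for $i=2,\dots,k$ set $\hat{z}_i=$ SQRT$(\hat{z}_{i-1},m+b,m,b)$. Return $\hat{z}_1,\dots,\hat{z}_k$. Algorithm FractionalPower$(w,f,n,m,n_f,\ell)$ (input $w\geq1$, $f=\sum_{i=1}^{n_f}f_i2^{-i}$ or $f=1$, bits $f_i\in\{0,1\}$): set $b=\max\{n,n_f,\lceil 5(\ell+2m+\ln n_f)\rceil,40\}$. If $f=1$ return $w$; if $f=0$ return $1$. Let $\hat{w}_1,\dots,\hat{w}_{n_f}$ be the outputs of PowerOf2Roots$(w,n_f,n,m,b)$. Set $\hat{z}=1$; for $i=1,\dots,n_f$, if $f_i=1$ replace $\hat{z}$ by $\hat{z}\hat{w}_i$ truncated to $b$ bits. Return $\hat{z}$. Algorithm FractionalPower2$(w,f,n,m,n_f,\ell)$ (input $0\le w<1$, $f\in[0,1]$ with $n_f$ fractional bits): set $b=\max\{n,n_f,\lceil 2\ell+6m+2\ln n_f\rceil,40\}$. If $w=0$ return $0$; if $f=1$ return $w$; if $f=0$ return $1$. Let $k$ be the positive integer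 with $2^kw\geq 1>2^{k-1}w$ and set $x=2^kw$ (exact shift). Set $c=kf$ (exact). Let $\hat{z}=$ FractionalPower$(x,f,n,m,n_f,\ell)$, $\hat{y}=$ FractionalPower$(2,\{c\},n,m,n_f,\ell)$, $\hat{s}=$ INV$(\hat{y},n,1,2\ell)$, $v=2^{-\lfloor c\rfloor}\hat{z}$ (exact shift), and let $\hat{t}$ be $v\hat{s}$ truncated to $b$ bits after the binary point. Return $\hat{t}$. *)

theory Defs
  imports "HOL-Analysis.Analysis"
begin

definition trunc_bits :: "nat \<Rightarrow> real \<Rightarrow> real" where
  "trunc_bits b x = real_of_int \<lfloor>2 ^ b * x\<rfloor> / 2 ^ b"

definition fixed_repr :: "nat \<Rightarrow> nat \<Rightarrow> real \<Rightarrow> bool" where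
  "fixed_repr n m w \<longleftrightarrow> (\<exists>d :: int \<Rightarrow> nat. (\<forall>j. d j \<in> {0, 1}) \<and>
      w = (\<Sum>j\<in>{int m - int n .. int m - 1}. real (d j) * 2 powr (real_of_int j)))"

definition frac_repr :: "nat \<Rightarrow> real \<Rightarrow> bool" where
  "frac_repr nf f \<longleftrightarrow> f = 1 \<or> (\<exists>fb :: nat \<Rightarrow> nat. (\<forall>i. fb i \<in> {0, 1}) \<and>
      f = (\<Sum>i\<in>{1..nf}. real (fb i) * 2 powr (- real i)))"

definition frac_bit :: "real \<Rightarrow> nat \<Rightarrow> bool" where
  "frac_bit f i \<longleftrightarrow> odd \<lfloor>2 ^ i * f\<rfloor>"

definition frac_part :: "real \<Rightarrow> real" where
  "frac_part c = c - real_of_int \<lfloor>c\<rfloor>"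

definition num_steps :: "nat \<Rightarrow> nat" where
  "num_steps b = nat \<lceil>log 2 (real b)\<rceil>"

text \<open>The Newton loop of INV: returns \<open>x_s\<close> (hat), for w > 1.\<close>
definition inv_loop :: "real \<Rightarrow> nat \<Rightarrow> real" where
  "inv_loop w b =
     (let p = (THE p :: nat. 2 ^ p > w \<and> w \<ge> 2 ^ (p - 1))
      in ((\<lambda>x. trunc_bits b (- w * x\<^sup>2 + 2 * x)) ^^ num_steps b) (2 powr (- real p)))"

definition INV :: "real \<Rightarrow> nat \<Rightarrow> nat \<Rightarrow> nat \<Rightarrow> real" where
  "INV w n m b = (if w = 1 then 1 else inv_loop w b)"

definition SQRT :: "real \<Rightarrow> nat \<Rightarrow> nat \<Rightarrow> nat \<Rightarrow> real" where
  "SQRT w n m b =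
     (if w = 1 then 1 else
      (let xs = inv_loop w b;
           q = (THE q :: nat. 2 powr (1 - real q) > xs \<and> xs \<ge> 2 powr (- real q));
           y0 = 2 powr (real_of_int ((int q - 1) div 2))
       in ((\<lambda>y. trunc_bits b ((3 * y - xs * y ^ 3) / 2)) ^^ num_steps b) y0))"

fun pow2roots :: "real \<Rightarrow> nat \<Rightarrow> nat \<Rightarrow> nat \<Rightarrow> nat \<Rightarrow> real" where
  "pow2roots w n m b 0 = undefined"
| "pow2roots w n m b (Suc 0) = SQRT w n m b"
| "pow2roots w n m b (Suc (Suc i)) = SQRT (pow2roots w n m b (Suc i)) (m + b) m b"

primrec fp_loop :: "(nat \<Rightarrow> real) \<Rightarrow> real \<Rightarrow> nat \<Rightarrow> nat \<Rightarrow> real" where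
  "fp_loop wh f b 0 = 1"
| "fp_loop wh f b (Suc i) =
     (if frac_bit f (Suc i) then trunc_bits b (fp_loop wh f b i * wh (Suc i))
      else fp_loop wh f b i)"

definition FractionalPower :: "real \<Rightarrow> real \<Rightarrow> nat \<Rightarrow> nat \<Rightarrow> nat \<Rightarrow> nat \<Rightarrow> real" where
  "FractionalPower w f n m nf l =
     (let b = max (max n nf) (max (nat \<lceil>5 * (real l + 2 * real m + ln (real nf))\<rceil>) 40)
      in if f = 1 then w else if f = 0 then 1 else
         fp_loop (pow2roots w n m b) f b nf)"

definition FractionalPower2 :: "real \<Rightarrow> real \<Rightarrow> nat \<Rightarrow> nat \<Rightarrow> nat \<Rightarrow> nat \<Rightarrow> real" where
  "FractionalPower2 w f n m nf l =
     (let b = max (max n nf) (max (nat \<lceil>2 * real l + 6 * real m + 2 * ln (real nf)\<rceil>) 40)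
      in if w = 0 then 0 else if f = 1 then w else if f = 0 then 1 else
      (let k = (THE k :: nat. 0 < k \<and> 2 ^ k * w \<ge> 1 \<and> 1 > 2 ^ (k - 1) * w);
           x = 2 ^ k * w;
           c = real k * f;
           zh = FractionalPower x f n m nf l;
           yh = FractionalPower 2 (frac_part c) n m nf l;
           sh = INV yh n 1 (2 * l);
           v = 2 powr (- real_of_int \<lfloor>c\<rfloor>) * zh
       in trunc_bits b (v * sh)))"

end

theory Submission
  imports Defs
begin

text \<open>Newton's iterations for \<open>1/w\<close> and for \<open>1/sqrt w\<close> square their residual in every step, so
  after \<open>\<lceil>log\<^sub>2 b\<rceil>\<close> truncated steps they are within a constant times \<open>2^-b\<close> of their limits.
  Hence PowerOf2Roots yields \<open>x^(2^-j)\<close> for \<open>x \<in> [1, 2]\<close> with additive error \<open>28 \<cdot> 2^-b\<close>, and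
  FractionalPower, multiplying those selected by the bits of \<open>f\<close>, gets \<open>x^f\<close> with relative
  error \<open>85 n\<^sub>f 2^-b \<le> 2^-l / 8\<close>.

  For \<open>w \<in> (0, 1)\<close> write \<open>x = 2^K w \<in> [1, 2)\<close> and \<open>c = K f\<close>; then
  \<open>w^f = 2^-\<lfloor>c\<rfloor> x^f / 2^{c}\<close>. Numerator and denominator are computed to \<open>2^-l / 4\<close>, the
  denominator is inverted by INV to \<open>2^-l \<cdot> 7/2\<close>, and \<open>2^-\<lfloor>c\<rfloor> \<le> 1\<close> does not enlarge the error,
  giving \<open>31/4 \<cdot> 2^-l\<close> plus \<open>2^-l / 4\<close> for the final truncation.\<close>

section \<open>Truncation\<close>

lemma trunc_bits_le: "trunc_bits b x \<le> x"
proof -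
  have "real_of_int \<lfloor>2 ^ b * x\<rfloor> \<le> 2 ^ b * x" by simp
  thus ?thesis unfolding trunc_bits_def by (simp add: divide_le_eq mult.commute)
qed

lemma less_trunc_bits_plus: "x < trunc_bits b x + 1 / 2 ^ b"
proof -
  have "2 ^ b * x < real_of_int \<lfloor>2 ^ b * x\<rfloor> + 1" by linarith
  hence "x < (real_of_int \<lfloor>2 ^ b * x\<rfloor> + 1) / 2 ^ b" by (simp add: less_divide_eq mult.commute)
  thus ?thesis unfolding trunc_bits_def by (simp add: add_divide_distrib)
qed

lemma abs_trunc_bits_diff_le: "\<bar>trunc_bits b x - x\<bar> \<le> 1 / 2 ^ b"
  using trunc_bits_le[of b x] less_trunc_bits_plus[of x b] by linarith

lemma trunc_bits_mono: "x \<le> y \<Longrightarrow> trunc_bits b x \<le> trunc_bits b y"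
  unfolding trunc_bits_def by (intro divide_right_mono) (auto intro: floor_mono)

lemma trunc_bits_of_int: "trunc_bits b (of_int k) = of_int k"
proof -
  have "\<lfloor>(2::real) ^ b * of_int k\<rfloor> = 2 ^ b * k"
    by (metis floor_of_int of_int_mult of_int_numeral of_int_power)
  thus ?thesis unfolding trunc_bits_def by simp
qed

lemma trunc_bits_nonneg: "0 \<le> x \<Longrightarrow> 0 \<le> trunc_bits b x"
  using trunc_bits_mono[of 0 x b] trunc_bits_of_int[of b 0] by simp

lemma one_le_trunc_bits: "1 \<le> x \<Longrightarrow> 1 \<le> trunc_bits b x"
  using trunc_bits_mono[of 1 x b] trunc_bits_of_int[of b 1] by simp

section \<open>Quadratically convergent recurrences\<close>

lemma le_two_power_num_steps: "b \<le> 2 ^ num_steps b"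
proof (cases "b = 0")
  case False
  have "real b = 2 powr log 2 (real b)" using False by simp
  also have "\<dots> \<le> 2 powr real (num_steps b)"
    unfolding num_steps_def using False by (intro powr_mono) auto
  finally have "real b \<le> 2 ^ num_steps b" by (simp add: powr_realpow)
  thus ?thesis by (metis of_nat_le_iff of_nat_numeral of_nat_power)
qed simp

lemma num_steps_pos: "2 \<le> b \<Longrightarrow> 1 \<le> num_steps b"
proof -
  assume "2 \<le> b"
  hence "0 < log 2 (real b)" by simp
  thus ?thesis unfolding num_steps_def by linarith
qed

lemma quadratic_recurrence_bound:
  fixes e :: "nat \<Rightarrow> real" and D :: real
  assumes D: "0 \<le> D" "D \<le> 1/16" and e1: "e 1 \<le> 1/4 + D"
    and step: "\<And>j. 1 \<le> j \<Longrightarrow> e (Suc j) \<le> (e j)\<^sup>2 + D" and nonneg: "\<And>j. 0 \<le> e j"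
  shows "1 \<le> j \<Longrightarrow> e j \<le> (1/2) ^ (2 ^ j) + 4 * D"
proof (induction j rule: nat_induct_at_least)
  case base then show ?case using e1 D by (simp add: power2_eq_square)
next
  case (Suc j)
  define a :: real where "a = (1/2) ^ (2 ^ j)"
  have "(2::nat) ^ 1 \<le> 2 ^ j" using Suc(1) by (intro power_increasing) auto
  hence "a \<le> (1/2) ^ (2 ^ 1)" unfolding a_def by (rule power_decreasing) auto
  hence a4: "a \<le> 1/4" by (simp add: power2_eq_square)
  have "e (Suc j) \<le> (e j)\<^sup>2 + D" using step Suc(1) by simp
  also have "\<dots> \<le> (a + 4 * D)\<^sup>2 + D" using Suc(2) nonneg[of j] unfolding a_def
    by (intro add_right_mono power_mono) auto
  also have "\<dots> = a\<^sup>2 + 8 * a * D + 16 * D * D + D" by (simp add: power2_eq_square algebra_simps)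
  also have "\<dots> \<le> a\<^sup>2 + 4 * D"
  proof -
    have "8 * a * D \<le> 2 * D" using a4 D by (simp add: mult_right_mono)
    moreover have "16 * D * D \<le> 1 * D" using D by (intro mult_right_mono) auto
    ultimately show ?thesis by linarith
  qed
  also have "a\<^sup>2 = (1/2) ^ (2 ^ Suc j)" unfolding a_def by (simp add: power_mult[symmetric] mult.commute)
  finally show ?case .
qed

lemma quadratic_recurrence_num_steps:
  fixes e :: "nat \<Rightarrow> real" and D :: real
  assumes "0 \<le> D" "D \<le> 1/16" "e 1 \<le> 1/4 + D"
    and "\<And>j. e (Suc j) \<le> (e j)\<^sup>2 + D" and "\<And>j. 0 \<le> e j" and "2 \<le> b"
  shows "e (num_steps b) \<le> (1/2) ^ b + 4 * D"
proof -
  have "e (num_steps b) \<le> (1/2) ^ (2 ^ num_steps b) + 4 * D"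
    using quadratic_recurrence_bound[of D e] num_steps_pos[of b] assms by blast
  also have "(1/2::real) ^ (2 ^ num_steps b) \<le> (1/2) ^ b"
    using le_two_power_num_steps[of b] by (intro power_decreasing) auto
  finally show ?thesis by simp
qed

section \<open>Newton iteration for the inverse\<close>

definition inv_step :: "real \<Rightarrow> nat \<Rightarrow> real \<Rightarrow> real" where
  "inv_step w b x = trunc_bits b (- w * x\<^sup>2 + 2 * x)"

lemma inv_step_residual:
  assumes w: "0 < w" and x: "0 \<le> x" "w * x \<le> 1"
  shows "0 \<le> inv_step w b x" "w * inv_step w b x \<le> 1"
    "1 - w * inv_step w b x \<le> (1 - w * x)\<^sup>2 + w / 2 ^ b"
proof -
  define v where "v = - w * x\<^sup>2 + 2 * x"
  have "v = x * (2 - w * x)" unfolding v_def by (simp add: power2_eq_square algebra_simps)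
  hence v0: "0 \<le> v" using x by simp
  have residual: "1 - w * v = (1 - w * x)\<^sup>2" unfolding v_def by (simp add: power2_eq_square algebra_simps)
  have le: "inv_step w b x \<le> v" unfolding inv_step_def v_def by (rule trunc_bits_le)
  have gt: "v < inv_step w b x + 1 / 2 ^ b" unfolding inv_step_def v_def by (rule less_trunc_bits_plus)
  show "0 \<le> inv_step w b x" unfolding inv_step_def using v0 v_def trunc_bits_nonneg by simp
  have "w * inv_step w b x \<le> w * v" using le w by simp
  also have "\<dots> \<le> 1" using residual zero_le_power2[of "1 - w * x"] by linarith
  finally show "w * inv_step w b x \<le> 1" .
  have "w * v < w * (inv_step w b x + 1 / 2 ^ b)" using gt w by (rule mult_strict_left_mono)
  thus "1 - w * inv_step w b x \<le> (1 - w * x)\<^sup>2 + w / 2 ^ b" using residual by (simp add: distrib_left)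
qed

lemma inv_loop_start:
  fixes w :: real
  assumes "1 < w" "w < 4"
  shows "(THE p :: nat. 2 ^ p > w \<and> w \<ge> 2 ^ (p - 1)) = (if w < 2 then 1 else 2)"
proof (rule the_equality)
  fix p :: nat assume p: "2 ^ p > w \<and> w \<ge> 2 ^ (p - 1)"
  consider "p = 0" | "p = 1" | "p = 2" | "p \<ge> 3" by linarith
  then show "p = (if w < 2 then 1 else 2)"
  proof cases
    case 4
    have "(2::real) ^ 2 \<le> 2 ^ (p - 1)" using 4 by (intro power_increasing) auto
    then show ?thesis using p assms by simp
  qed (use p assms in auto)
qed (use assms in auto)

lemma inv_loop_residual_recurrence:
  assumes w: "1 < w" "w < 4"
  obtains e :: "nat \<Rightarrow> real" where "1 - w * inv_loop w b = e (num_steps b)"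
    "\<And>j. 0 \<le> e j" "e 0 \<le> 1/2" "\<And>j. e (Suc j) \<le> (e j)\<^sup>2 + w / 2 ^ b"
    "0 \<le> inv_loop w b" "w * inv_loop w b \<le> 1"
proof -
  define xs where "xs j = (inv_step w b ^^ j) (if w < 2 then 1/2 else 1/4)" for j
  have loop: "inv_loop w b = xs (num_steps b)"
  proof -
    have "(\<lambda>x. trunc_bits b (- w * x\<^sup>2 + 2 * x)) = inv_step w b"
      unfolding inv_step_def by (rule ext) simp
    moreover have "(2::real) powr (- real (if w < 2 then 1 else 2 :: nat)) = (if w < 2 then 1/2 else 1/4)"
      by (auto simp: powr_minus powr_realpow)
    ultimately show ?thesis unfolding inv_loop_def Let_def inv_loop_start[OF w] xs_def by simp
  qed
  have xs_Suc: "xs (Suc j) = inv_step w b (xs j)" for j unfolding xs_def by simp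
  have inv: "0 \<le> xs j \<and> w * xs j \<le> 1" for j
  proof (induction j)
    case 0 then show ?case using w unfolding xs_def by auto
  next
    case (Suc j) then show ?case using inv_step_residual[of w "xs j" b] w xs_Suc by auto
  qed
  show thesis
  proof (rule that[of "\<lambda>j. 1 - w * xs j"])
    show "1 - w * xs 0 \<le> 1/2" using w unfolding xs_def by auto
    show "1 - w * xs (Suc j) \<le> (1 - w * xs j)\<^sup>2 + w / 2 ^ b" for j
      using inv_step_residual(3)[of w "xs j" b] inv w xs_Suc by auto
  qed (use inv loop in auto)
qed

lemma inv_loop_bounds:
  assumes "1 < w" "w < 4"
  shows "0 \<le> inv_loop w b" "w * inv_loop w b \<le> 1"
  using inv_loop_residual_recurrence[OF assms] by metis+

lemma inv_loop_residual_le_half: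
  assumes w: "1 < w" "w < 4" and D: "w / 2 ^ b \<le> 1/4"
  shows "1 - w * inv_loop w b \<le> 1/2"
proof -
  obtain e where e: "1 - w * inv_loop w b = e (num_steps b)"
    "\<And>j. 0 \<le> e j" "e 0 \<le> 1/2" "\<And>j. e (Suc j) \<le> (e j)\<^sup>2 + w / 2 ^ b"
    using inv_loop_residual_recurrence[OF w] by metis
  have "e j \<le> 1/2" for j
  proof (induction j)
    case (Suc j)
    have "(e j)\<^sup>2 \<le> (1/2)\<^sup>2" using Suc e(2)[of j] by (intro power_mono) auto
    hence "(e j)\<^sup>2 \<le> 1/4" by (simp add: power2_eq_square)
    then show ?case using e(4)[of j] D by linarith
  qed (use e in simp)
  thus ?thesis using e(1) by simp
qed

lemma inv_loop_residual_le:
  assumes w: "1 < w" "w < 4" and b: "2 \<le> b" and D: "w / 2 ^ b \<le> 1/16"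
  shows "1 - w * inv_loop w b \<le> (1/2) ^ b + 4 * (w / 2 ^ b)"
proof -
  obtain e where e: "1 - w * inv_loop w b = e (num_steps b)"
    "\<And>j. 0 \<le> e j" "e 0 \<le> 1/2" "\<And>j. e (Suc j) \<le> (e j)\<^sup>2 + w / 2 ^ b"
    using inv_loop_residual_recurrence[OF w] by metis
  have "(e 0)\<^sup>2 \<le> (1/2)\<^sup>2" using e(2,3) by (intro power_mono) auto
  hence "e 1 \<le> 1/4 + w / 2 ^ b" using e(4)[of 0] by (simp add: power2_eq_square)
  thus ?thesis unfolding e(1) using quadratic_recurrence_num_steps[of "w / 2 ^ b" e b] e w b D by simp
qed

section \<open>Newton iteration for the square root\<close>

text \<open>Newton's iteration for \<open>1 / sqrt xs\<close>; SQRT runs it with \<open>xs \<approx> 1/a\<close>, so it converges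
  to \<open>sqrt a\<close>.\<close>
definition sqrt_step :: "real \<Rightarrow> nat \<Rightarrow> real \<Rightarrow> real" where
  "sqrt_step xs b y = trunc_bits b ((3 * y - xs * y ^ 3) / 2)"

lemma mult_le_one_of_mult_square_le_one:
  fixes a t :: real
  assumes "0 \<le> a" "a \<le> 1" "0 \<le> t" "a * t\<^sup>2 \<le> 1"
  shows "a * t \<le> 1"
proof -
  have "(a * t)\<^sup>2 = a * (a * t\<^sup>2)" by (simp add: power2_eq_square)
  also have "\<dots> \<le> 1" using assms mult_le_one[of a "a * t\<^sup>2"] by simp
  finally show ?thesis using assms power2_le_imp_le[of "a * t" 1] by simp
qed

lemma inv_sqrt_newton_step:
  fixes xs y :: real
  assumes xs: "0 < xs" "xs \<le> 1" and y: "1 \<le> y" "xs * y\<^sup>2 \<le> 1"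
  defines "g \<equiv> (3 * y - xs * y ^ 3) / 2" and "e \<equiv> 1 - xs * y\<^sup>2"
  shows "1 \<le> g" "1 - xs * g\<^sup>2 = (3 * e\<^sup>2 + e ^ 3) / 4"
proof -
  have g2: "2 * g = 3 * y - xs * y ^ 3" unfolding g_def by simp
  have "xs * y \<le> 1" using mult_le_one_of_mult_square_le_one[of xs y] xs y by simp
  hence "0 \<le> (y - 1) * (3 - xs * y\<^sup>2 - xs * y - xs)" using y xs by (intro mult_nonneg_nonneg) auto
  moreover have "2 * g - 2 = (y - 1) * (3 - xs * y\<^sup>2 - xs * y - xs) + (1 - xs)"
    unfolding g2 by algebra
  ultimately show "1 \<le> g" using xs by linarith
  have "4 * (1 - xs * g\<^sup>2) = 4 - xs * (2 * g)\<^sup>2" by (simp add: power2_eq_square)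
  also have "xs * (2 * g)\<^sup>2 = (xs * y\<^sup>2) * (3 - xs * y\<^sup>2)\<^sup>2" unfolding g2 by algebra
  also have "4 - (xs * y\<^sup>2) * (3 - xs * y\<^sup>2)\<^sup>2 = 3 * e\<^sup>2 + e ^ 3" unfolding e_def by algebra
  finally show "1 - xs * g\<^sup>2 = (3 * e\<^sup>2 + e ^ 3) / 4" by simp
qed

lemma trunc_bits_square_residual:
  fixes xs g :: real
  assumes xs: "0 < xs" "xs \<le> 1" and g: "1 \<le> g" "xs * g\<^sup>2 \<le> 1"
  shows "xs * (trunc_bits b g)\<^sup>2 \<le> 1" "1 - xs * (trunc_bits b g)\<^sup>2 \<le> 1 - xs * g\<^sup>2 + 3 / 2 ^ b"
proof -
  define y' where "y' = trunc_bits b g"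
  define \<delta> :: real where "\<delta> = 1 / 2 ^ b"
  have \<delta>: "0 < \<delta>" "\<delta> \<le> 1" unfolding \<delta>_def by auto
  have y'g: "y' \<le> g" unfolding y'_def by (rule trunc_bits_le)
  have gy': "g < y' + \<delta>" unfolding y'_def \<delta>_def by (rule less_trunc_bits_plus)
  have y'1: "1 \<le> y'" unfolding y'_def using g by (intro one_le_trunc_bits)
  have "xs * y'\<^sup>2 \<le> xs * g\<^sup>2" using y'1 y'g xs by (intro mult_left_mono power_mono) auto
  thus "xs * (trunc_bits b g)\<^sup>2 \<le> 1" using g unfolding y'_def by linarith
  have "xs * g \<le> 1" using mult_le_one_of_mult_square_le_one[of xs g] xs g by simp
  moreover have "xs * y' \<le> xs * g" using y'g xs by (intro mult_left_mono) auto
  ultimately have "2 * (xs * y') * \<delta> \<le> 2 * \<delta>" using \<delta> by (intro mult_right_mono) auto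
  moreover have "xs * \<delta>\<^sup>2 \<le> \<delta>"
  proof -
    have "xs * \<delta> \<le> 1" using xs \<delta> by (intro mult_le_one) auto
    hence "xs * \<delta> * \<delta> \<le> 1 * \<delta>" using \<delta> by (intro mult_right_mono) auto
    thus ?thesis by (simp add: power2_eq_square mult.assoc)
  qed
  moreover have "xs * g\<^sup>2 \<le> xs * y'\<^sup>2 + 2 * (xs * y') * \<delta> + xs * \<delta>\<^sup>2"
  proof -
    have "g\<^sup>2 \<le> (y' + \<delta>)\<^sup>2" using gy' g by (intro power_mono) auto
    hence "xs * g\<^sup>2 \<le> xs * (y' + \<delta>)\<^sup>2" using xs by (intro mult_left_mono) auto
    thus ?thesis by (simp add: power2_eq_square algebra_simps)
  qed
  ultimately show "1 - xs * (trunc_bits b g)\<^sup>2 \<le> 1 - xs * g\<^sup>2 + 3 / 2 ^ b"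
    unfolding y'_def \<delta>_def by linarith
qed

lemma sqrt_step_residual:
  assumes xs: "0 < xs" "xs \<le> 1" and y: "1 \<le> y" "xs * y\<^sup>2 \<le> 1"
  shows "1 \<le> sqrt_step xs b y" "xs * (sqrt_step xs b y)\<^sup>2 \<le> 1"
    "1 - xs * (sqrt_step xs b y)\<^sup>2 \<le> (3 * (1 - xs * y\<^sup>2)\<^sup>2 + (1 - xs * y\<^sup>2) ^ 3) / 4 + 3 / 2 ^ b"
proof -
  define g where "g = (3 * y - xs * y ^ 3) / 2"
  have g: "1 \<le> g" "1 - xs * g\<^sup>2 = (3 * (1 - xs * y\<^sup>2)\<^sup>2 + (1 - xs * y\<^sup>2) ^ 3) / 4"
    using inv_sqrt_newton_step[OF xs y] unfolding g_def by auto
  moreover have "0 \<le> (3 * (1 - xs * y\<^sup>2)\<^sup>2 + (1 - xs * y\<^sup>2) ^ 3) / 4" using y by simp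
  ultimately have "xs * g\<^sup>2 \<le> 1" by linarith
  then show "1 \<le> sqrt_step xs b y" "xs * (sqrt_step xs b y)\<^sup>2 \<le> 1"
    "1 - xs * (sqrt_step xs b y)\<^sup>2 \<le> (3 * (1 - xs * y\<^sup>2)\<^sup>2 + (1 - xs * y\<^sup>2) ^ 3) / 4 + 3 / 2 ^ b"
    using trunc_bits_square_residual[OF xs g(1)] one_le_trunc_bits[OF g(1)] g(2)
    unfolding sqrt_step_def g_def[symmetric] by auto
qed

lemma sqrt_step_iterate_residual:
  assumes xs: "49/100 \<le> xs" "xs \<le> 1" and b: "40 \<le> b"
  defines "y \<equiv> (sqrt_step xs b ^^ num_steps b) 1"
  shows "1 \<le> y" "xs * y\<^sup>2 \<le> 1" "1 - xs * y\<^sup>2 \<le> 13 / 2 ^ b"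
proof -
  define ys where "ys j = (sqrt_step xs b ^^ j) 1" for j
  have xs_pos: "0 < xs" using xs by simp
  have ys_Suc: "ys (Suc j) = sqrt_step xs b (ys j)" for j unfolding ys_def by simp
  have inv: "1 \<le> ys j \<and> xs * (ys j)\<^sup>2 \<le> 1" for j
  proof (induction j)
    case 0 then show ?case using xs unfolding ys_def by simp
  next
    case (Suc j) then show ?case using sqrt_step_residual(1,2)[OF xs_pos xs(2), of "ys j" b] ys_Suc by simp
  qed
  then show "1 \<le> y" "xs * y\<^sup>2 \<le> 1" unfolding y_def ys_def by auto
  define e where "e j = 1 - xs * (ys j)\<^sup>2" for j
  have e_nonneg: "0 \<le> e j" and e_le1: "e j \<le> 1" for j using inv[of j] xs unfolding e_def by auto
  have e_Suc: "e (Suc j) \<le> (3 * (e j)\<^sup>2 + (e j) ^ 3) / 4 + 3 / 2 ^ b" for j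
    using sqrt_step_residual(3)[OF xs_pos xs(2), of "ys j" b] inv[of j] ys_Suc unfolding e_def by simp
  have e_Suc_quadratic: "e (Suc j) \<le> (e j)\<^sup>2 + 3 / 2 ^ b" for j
  proof -
    have "(e j)\<^sup>2 * e j \<le> (e j)\<^sup>2 * 1" using e_nonneg[of j] e_le1[of j] by (intro mult_left_mono) auto
    hence "(e j) ^ 3 \<le> (e j)\<^sup>2" by (simp add: power3_eq_cube power2_eq_square)
    hence "(3 * (e j)\<^sup>2 + (e j) ^ 3) / 4 \<le> (e j)\<^sup>2" by (simp add: divide_le_eq)
    thus ?thesis using e_Suc[of j] by linarith
  qed
  have e1: "e 1 \<le> 1/4 + 3 / 2 ^ b"
  proof -
    have e0: "e 0 \<le> 51/100" using xs unfolding e_def ys_def by simp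
    have "(e 0)\<^sup>2 \<le> (51/100)\<^sup>2" "(e 0) ^ 3 \<le> (51/100) ^ 3" using e0 e_nonneg[of 0] by (intro power_mono; simp)+
    hence "(3 * (e 0)\<^sup>2 + (e 0) ^ 3) / 4 \<le> 1/4" by (simp add: power2_eq_square power3_eq_cube)
    moreover have "e 1 \<le> (3 * (e 0)\<^sup>2 + (e 0) ^ 3) / 4 + 3 / 2 ^ b" using e_Suc[of 0] by simp
    ultimately show ?thesis by linarith
  qed
  have "(2::real) ^ 40 \<le> 2 ^ b" using b by (intro power_increasing) auto
  hence D: "3 / (2::real) ^ b \<le> 1/16" by (simp add: divide_simps)
  have "e (num_steps b) \<le> (1/2) ^ b + 4 * (3 / 2 ^ b)"
    using quadratic_recurrence_num_steps[of "3 / 2 ^ b" e b] D e1 e_Suc_quadratic e_nonneg b by simp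
  thus "1 - xs * y\<^sup>2 \<le> 13 / 2 ^ b" unfolding e_def ys_def y_def by (simp add: power_one_over)
qed

lemma inv_loop_near_inverse:
  assumes a: "1 < a" "a \<le> 2" and b: "40 \<le> b"
  shows "a * inv_loop a b \<le> 1" "1 - a * inv_loop a b \<le> 9 / 2 ^ b"
    "49/100 \<le> inv_loop a b" "inv_loop a b < 1"
proof -
  define xs where "xs = inv_loop a b"
  have "0 \<le> xs" and axs: "a * xs \<le> 1" using inv_loop_bounds[of a b] a unfolding xs_def by auto
  then show "a * inv_loop a b \<le> 1" unfolding xs_def by simp
  have pb: "(2::real) ^ 40 \<le> 2 ^ b" using b by (intro power_increasing) auto
  have a2: "a / 2 ^ b \<le> 2 / 2 ^ b" using a by (intro divide_right_mono) auto
  also have "2 / 2 ^ b \<le> (1::real) / 16" using pb by (simp add: divide_simps)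
  finally have "1 - a * xs \<le> (1/2) ^ b + 4 * (a / 2 ^ b)"
    using inv_loop_residual_le[of a b] a b unfolding xs_def by auto
  hence res: "1 - a * xs \<le> 9 / 2 ^ b" using a2 by (simp add: power_one_over)
  then show "1 - a * inv_loop a b \<le> 9 / 2 ^ b" unfolding xs_def .
  have "9 / 2 ^ b \<le> (9::real) / 2 ^ 40" using pb by (intro divide_left_mono) auto
  hence "98/100 \<le> a * xs" using res by simp
  moreover have "a * xs \<le> 2 * xs" using a \<open>0 \<le> xs\<close> by (intro mult_right_mono) auto
  ultimately show "49/100 \<le> inv_loop a b" unfolding xs_def by linarith
  show "inv_loop a b < 1"
  proof (rule ccontr)
    assume "\<not> inv_loop a b < 1"
    hence "a * 1 \<le> a * xs" using a unfolding xs_def by (intro mult_left_mono) auto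
    thus False using a axs by linarith
  qed
qed

lemma sqrt_loop_start:
  assumes "1/4 < xs" "xs < 1"
  shows "(THE q :: nat. 2 powr (1 - real q) > xs \<and> xs \<ge> 2 powr (- real q)) = (if xs \<ge> 1/2 then 1 else 2)"
proof (rule the_equality)
  fix q :: nat assume q: "2 powr (1 - real q) > xs \<and> xs \<ge> 2 powr (- real q)"
  consider "q = 0" | "q = 1" | "q = 2" | "q \<ge> 3" by linarith
  then show "q = (if xs \<ge> 1/2 then 1 else 2)"
  proof cases
    case 4
    have "2 powr (1 - real q) \<le> 2 powr (-2)" using 4 by (intro powr_mono) auto
    moreover have "(2::real) powr (-2) = 1/4" by (simp add: powr_minus powr_realpow)
    ultimately show ?thesis using q assms by linarith
  qed (use q assms in \<open>auto simp: powr_minus powr_realpow powr_diff\<close>)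
qed (use assms in \<open>auto simp: powr_minus powr_realpow powr_diff\<close>)

lemma SQRT_eq_iterate:
  assumes a: "1 < a" "a \<le> 2" and b: "40 \<le> b"
  shows "SQRT a n m b = (sqrt_step (inv_loop a b) b ^^ num_steps b) 1"
proof -
  define xs where "xs = inv_loop a b"
  have "49/100 \<le> xs" "xs < 1" using inv_loop_near_inverse[OF a b] unfolding xs_def by auto
  hence "(THE q :: nat. 2 powr (1 - real q) > xs \<and> xs \<ge> 2 powr (- real q)) = (if xs \<ge> 1/2 then 1 else 2)"
    by (intro sqrt_loop_start) auto
  moreover have "(2::real) powr (real_of_int ((int (if xs \<ge> 1/2 then 1 else 2) - 1) div 2)) = 1"
    by auto
  moreover have "(\<lambda>y. trunc_bits b ((3 * y - xs * y ^ 3) / 2)) = sqrt_step xs b"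
    unfolding sqrt_step_def by (rule ext) simp
  ultimately show ?thesis using a unfolding SQRT_def Let_def xs_def[symmetric] by simp
qed

lemma abs_sqrt_diff_le:
  assumes "1 \<le> u" "1 \<le> v"
  shows "\<bar>sqrt u - sqrt v\<bar> \<le> \<bar>u - v\<bar> / 2"
proof -
  have s: "1 \<le> sqrt u" "1 \<le> sqrt v" using assms by auto
  have "u - v = (sqrt u - sqrt v) * (sqrt u + sqrt v)" using assms by (simp add: algebra_simps)
  hence "\<bar>u - v\<bar> = \<bar>sqrt u - sqrt v\<bar> * (sqrt u + sqrt v)" using s by (simp add: abs_mult)
  also have "\<dots> \<ge> \<bar>sqrt u - sqrt v\<bar> * 2" using s by (intro mult_left_mono) linarith+
  finally show ?thesis by simp
qed

lemma SQRT_accuracy: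
  assumes a: "1 \<le> a" "a \<le> 2" and b: "40 \<le> b"
  shows "1 \<le> SQRT a n m b" "SQRT a n m b \<le> 2" "\<bar>SQRT a n m b - sqrt a\<bar> \<le> 14 / 2 ^ b"
proof -
  have "1 \<le> SQRT a n m b \<and> SQRT a n m b \<le> 2 \<and> \<bar>SQRT a n m b - sqrt a\<bar> \<le> 14 / 2 ^ b"
  proof (cases "a = 1")
    case True then show ?thesis unfolding SQRT_def by simp
  next
    case False
    hence a1: "1 < a" using a by simp
    define xs where "xs = inv_loop a b"
    define y where "y = (sqrt_step xs b ^^ num_steps b) 1"
    have xs: "49/100 \<le> xs" "xs \<le> 1" "a * xs \<le> 1" "1 - a * xs \<le> 9 / 2 ^ b"
      using inv_loop_near_inverse[OF a1 a(2) b] unfolding xs_def by auto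
    have y: "1 \<le> y" "xs * y\<^sup>2 \<le> 1" "1 - xs * y\<^sup>2 \<le> 13 / 2 ^ b"
      using sqrt_step_iterate_residual[OF xs(1,2) b] unfolding y_def by auto
    have "xs * (y\<^sup>2 - a) = (1 - a * xs) - (1 - xs * y\<^sup>2)" by (simp add: algebra_simps)
    hence "xs * \<bar>y\<^sup>2 - a\<bar> \<le> 13 / 2 ^ b" using xs y by (simp add: abs_mult[symmetric] abs_le_iff)
    moreover have "(49/100) * \<bar>y\<^sup>2 - a\<bar> \<le> xs * \<bar>y\<^sup>2 - a\<bar>" using xs by (intro mult_right_mono) auto
    ultimately have "(49/100) * \<bar>y\<^sup>2 - a\<bar> \<le> 13 / 2 ^ b" by linarith
    moreover have "\<bar>y - sqrt a\<bar> \<le> \<bar>y\<^sup>2 - a\<bar> / 2"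
      using abs_sqrt_diff_le[of "y\<^sup>2" a] y a by simp
    moreover have "0 < 1 / (2::real) ^ b" by simp
    ultimately have err: "\<bar>y - sqrt a\<bar> \<le> 14 / 2 ^ b" by linarith
    have "(49/100) * y\<^sup>2 \<le> xs * y\<^sup>2" using xs by (intro mult_right_mono) auto
    hence "y\<^sup>2 \<le> 2\<^sup>2" using y(2) by simp
    hence "y \<le> 2" using power2_le_imp_le[of y 2] by simp
    thus ?thesis using SQRT_eq_iterate[OF a1 a(2) b] y err unfolding y_def xs_def by simp
  qed
  thus "1 \<le> SQRT a n m b" "SQRT a n m b \<le> 2" "\<bar>SQRT a n m b - sqrt a\<bar> \<le> 14 / 2 ^ b" by auto
qed

section \<open>Fractional powers of numbers in [1, 2]\<close>

lemma pow2roots_accuracy: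
  assumes x: "1 \<le> x" "x \<le> 2" and b: "40 \<le> b"
  shows "1 \<le> pow2roots x n m b (Suc j) \<and> pow2roots x n m b (Suc j) \<le> 2 \<and>
         \<bar>pow2roots x n m b (Suc j) - x powr (1 / 2 ^ Suc j)\<bar> \<le> 28 / 2 ^ b"
proof (induction j)
  case 0
  have "x powr (1/2) = sqrt x" using x by (simp add: powr_half_sqrt)
  then show ?case using SQRT_accuracy[OF x b, of n m] by simp
next
  case (Suc j)
  define u where "u = pow2roots x n m b (Suc j)"
  define v where "v = x powr (1 / 2 ^ Suc j)"
  have v1: "1 \<le> v" unfolding v_def using x by (simp add: ge_one_powr_ge_zero)
  have u: "1 \<le> u" "u \<le> 2" "\<bar>u - v\<bar> \<le> 28 / 2 ^ b" using Suc unfolding u_def v_def by auto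
  have "sqrt v = v powr (1/2)" using v1 by (simp add: powr_half_sqrt)
  also have "\<dots> = x powr (1 / 2 ^ Suc (Suc j))" unfolding v_def by (simp add: powr_powr)
  finally have sqrt_v: "sqrt v = x powr (1 / 2 ^ Suc (Suc j))" .
  have "\<bar>sqrt u - sqrt v\<bar> \<le> 14 / 2 ^ b" using abs_sqrt_diff_le[of u v] u v1 by simp
  moreover have "\<bar>SQRT u (m + b) m b - sqrt u\<bar> \<le> 14 / 2 ^ b"
    "1 \<le> SQRT u (m + b) m b" "SQRT u (m + b) m b \<le> 2" using SQRT_accuracy[OF u(1,2) b] by auto
  ultimately show ?case unfolding u_def sqrt_v[symmetric] by simp
qed

lemma floor_two_power_Suc_mult:
  "\<lfloor>2 ^ Suc j * f\<rfloor> = 2 * \<lfloor>2 ^ j * f\<rfloor> + (if frac_bit f (Suc j) then 1 else 0)"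
proof -
  define y :: real where "y = 2 ^ j * f"
  have "2 * \<lfloor>y\<rfloor> \<le> \<lfloor>2 * y\<rfloor>" by (simp add: le_floor_iff)
  moreover have "\<lfloor>2 * y\<rfloor> \<le> 2 * \<lfloor>y\<rfloor> + 1"
    using floor_le_iff[of "2 * y" "2 * \<lfloor>y\<rfloor> + 1"] by linarith
  ultimately have "\<lfloor>2 * y\<rfloor> = 2 * \<lfloor>y\<rfloor> \<or> \<lfloor>2 * y\<rfloor> = 2 * \<lfloor>y\<rfloor> + 1" by linarith
  moreover have "\<lfloor>2 ^ Suc j * f\<rfloor> = \<lfloor>2 * y\<rfloor>" unfolding y_def by (simp add: mult.assoc)
  ultimately show ?thesis unfolding frac_bit_def y_def[symmetric] by auto
qed

lemma powr_dyadic_truncation_Suc: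
  fixes x :: real
  shows "x powr (\<lfloor>2 ^ Suc j * f\<rfloor> / 2 ^ Suc j)
     = (if frac_bit f (Suc j) then x powr (\<lfloor>2 ^ j * f\<rfloor> / 2 ^ j) * x powr (1 / 2 ^ Suc j)
        else x powr (\<lfloor>2 ^ j * f\<rfloor> / 2 ^ j))"
proof -
  have "real_of_int \<lfloor>2 ^ Suc j * f\<rfloor> / 2 ^ Suc j
      = \<lfloor>2 ^ j * f\<rfloor> / 2 ^ j + (if frac_bit f (Suc j) then 1 / 2 ^ Suc j else 0)"
    unfolding floor_two_power_Suc_mult by (auto simp: add_divide_distrib)
  thus ?thesis by (simp add: powr_add)
qed

lemma dyadic_truncation_bounds:
  fixes f :: real
  assumes "0 \<le> f" "f \<le> 1"
  shows "0 \<le> \<lfloor>2 ^ j * f\<rfloor> / (2 ^ j :: real)" "\<lfloor>2 ^ j * f\<rfloor> / (2 ^ j :: real) \<le> 1"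
proof -
  have "real_of_int \<lfloor>2 ^ j * f\<rfloor> \<le> 2 ^ j * f" by simp
  moreover have "2 ^ j * f \<le> 2 ^ j" using assms by simp
  ultimately have "real_of_int \<lfloor>2 ^ j * f\<rfloor> \<le> 2 ^ j" by linarith
  thus "\<lfloor>2 ^ j * f\<rfloor> / (2 ^ j :: real) \<le> 1" by (simp add: divide_le_eq)
  show "0 \<le> \<lfloor>2 ^ j * f\<rfloor> / (2 ^ j :: real)" using assms by simp
qed

lemma abs_trunc_bits_mult_diff_le:
  assumes "0 \<le> w" "0 \<le> z" "\<bar>z - P\<bar> \<le> \<delta>" "\<bar>w' - w\<bar> \<le> \<epsilon>"
  shows "\<bar>trunc_bits b (z * w') - P * w\<bar> \<le> \<delta> * w + z * \<epsilon> + 1 / 2 ^ b"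
proof -
  have "\<bar>z * w' - P * w\<bar> = \<bar>(z - P) * w + z * (w' - w)\<bar>" by (simp add: algebra_simps)
  also have "\<dots> \<le> \<bar>z - P\<bar> * w + z * \<bar>w' - w\<bar>"
    using assms abs_triangle_ineq[of "(z - P) * w" "z * (w' - w)"] by (simp add: abs_mult)
  also have "\<dots> \<le> \<delta> * w + z * \<epsilon>" using assms by (intro add_mono mult_right_mono mult_left_mono) auto
  finally show ?thesis using abs_trunc_bits_diff_le[of b "z * w'"] by linarith
qed

text \<open>The relative error grows by at most \<open>85/2^b\<close> per multiplication; the bound on \<open>J\<close> keeps
  it below \<open>1/2\<close>, which keeps the partial products below \<open>3\<close>.\<close>
lemma fp_loop_accuracy:
  fixes x f :: real and wh :: "nat \<Rightarrow> real"
  assumes x: "1 \<le> x" "x \<le> 2" and f: "0 \<le> f" "f < 1"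
    and wh: "\<And>j. 1 \<le> wh (Suc j) \<and> \<bar>wh (Suc j) - x powr (1 / 2 ^ Suc j)\<bar> \<le> 28 / 2 ^ b"
    and J: "170 * real J \<le> 2 ^ b"
  shows "j \<le> J \<Longrightarrow> 1 \<le> fp_loop wh f b j \<and>
     \<bar>fp_loop wh f b j - x powr (\<lfloor>2 ^ j * f\<rfloor> / 2 ^ j)\<bar>
       \<le> 85 / 2 ^ b * j * x powr (\<lfloor>2 ^ j * f\<rfloor> / 2 ^ j)"
proof (induction j)
  case 0
  have "\<lfloor>f\<rfloor> = 0" using f by (simp add: floor_eq_iff)
  then show ?case using x by simp
next
  case (Suc j)
  define z where "z = fp_loop wh f b j"
  define P where "P = x powr (\<lfloor>2 ^ j * f\<rfloor> / 2 ^ j)"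
  define w where "w = x powr (1 / 2 ^ Suc j)"
  define c :: real where "c = 85 / 2 ^ b"
  have z: "1 \<le> z" "\<bar>z - P\<bar> \<le> c * j * P" using Suc unfolding z_def P_def c_def by auto
  have "P \<le> x powr 1" unfolding P_def using x dyadic_truncation_bounds[of f j] f by (intro powr_mono) auto
  hence P: "1 \<le> P" "P \<le> 2" unfolding P_def using x dyadic_truncation_bounds[of f j] f
    by (auto simp: ge_one_powr_ge_zero)
  have w1: "1 \<le> w" unfolding w_def using x by (simp add: ge_one_powr_ge_zero)
  have "c * j \<le> c * J" using Suc.prems by (intro mult_left_mono) (auto simp: c_def)
  also have "\<dots> \<le> 1/2" using J by (simp add: c_def divide_simps)
  finally have "c * j * P \<le> 1/2 * 2" using P by (intro mult_mono) auto
  hence z3: "z \<le> 3" using z P by linarith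
  have target: "x powr (\<lfloor>2 ^ Suc j * f\<rfloor> / 2 ^ Suc j) = (if frac_bit f (Suc j) then P * w else P)"
    unfolding P_def w_def by (rule powr_dyadic_truncation_Suc)
  show ?case
  proof (cases "frac_bit f (Suc j)")
    case False
    have "c * j * P \<le> c * Suc j * P" using P by (intro mult_right_mono mult_left_mono) (auto simp: c_def)
    then show ?thesis using target False z unfolding z_def c_def by simp
  next
    case True
    define w' where "w' = wh (Suc j)"
    have w': "1 \<le> w'" "\<bar>w' - w\<bar> \<le> 28 / 2 ^ b" using wh[of j] unfolding w'_def w_def by auto
    have "\<bar>trunc_bits b (z * w') - P * w\<bar> \<le> c * j * P * w + z * (28 / 2 ^ b) + 1 / 2 ^ b"
      using abs_trunc_bits_mult_diff_le[of w z P "c * j * P" w' "28 / 2 ^ b" b] w1 z w' by simp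
    also have "\<dots> \<le> c * j * (P * w) + c" using z3 unfolding c_def by (simp add: divide_simps)
    also have "\<dots> \<le> c * Suc j * (P * w)"
    proof -
      have "1 \<le> P * w" using mult_mono[OF P(1) w1] P(1) by simp
      moreover have "0 \<le> c" unfolding c_def by simp
      ultimately have "c \<le> c * (P * w)" using mult_left_mono[of 1 "P * w" c] by simp
      thus ?thesis by (simp add: algebra_simps)
    qed
    finally have "\<bar>trunc_bits b (z * w') - P * w\<bar> \<le> c * Suc j * (P * w)" .
    moreover have "1 \<le> trunc_bits b (z * w')"
      using mult_mono[OF z(1) w'(1)] z(1) by (intro one_le_trunc_bits) simp
    ultimately show ?thesis using target True unfolding z_def w'_def c_def by simp
  qed
qed

lemma frac_repr_dyadic:
  assumes "frac_repr nf f" "f \<noteq> 1"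
  obtains N :: int where "2 ^ nf * f = real_of_int N"
proof -
  obtain fb :: "nat \<Rightarrow> nat" where f: "f = (\<Sum>i\<in>{1..nf}. real (fb i) * 2 powr (- real i))"
    using assms unfolding frac_repr_def by blast
  have "2 ^ nf * f = (\<Sum>i\<in>{1..nf}. real (fb i) * 2 ^ (nf - i))"
    unfolding f sum_distrib_left
  proof (rule sum.cong)
    fix i assume "i \<in> {1..nf}"
    hence "(2::real) ^ nf * 2 powr (- real i) = 2 powr (real (nf - i))"
      by (simp add: powr_diff powr_minus powr_realpow divide_simps)
    thus "2 ^ nf * (real (fb i) * 2 powr (- real i)) = real (fb i) * 2 ^ (nf - i)"
      by (simp add: powr_realpow)
  qed simp
  also have "\<dots> \<in> \<int>" by (intro Ints_sum Ints_mult Ints_power) auto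
  finally show ?thesis using that by (auto elim: Ints_cases)
qed

lemma linear_le_two_power: "32 \<le> t \<Longrightarrow> 2048 * t \<le> (2::nat) ^ t"
  by (induction t rule: nat_induct_at_least) simp_all

lemma precision_bound:
  fixes b nf l :: nat
  assumes "40 \<le> b" "nf \<le> b" "5 * l \<le> b"
  shows "680 * real nf * 2 ^ l \<le> (2::real) ^ b"
proof -
  define t where "t = b - l"
  have t: "32 \<le> t" "b = l + t" using assms unfolding t_def by auto
  have "680 * nf \<le> 2048 * t" using t assms by linarith
  also have "\<dots> \<le> 2 ^ t" using linear_le_two_power t by simp
  finally have "680 * nf * 2 ^ l \<le> (2::nat) ^ b" using t by (simp add: power_add)
  hence "real (680 * nf * 2 ^ l) \<le> real ((2::nat) ^ b)" by linarith
  thus ?thesis by simp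
qed

lemma FractionalPower_accuracy:
  fixes x g :: real and n m nf l :: nat and N :: int
  assumes x: "1 \<le> x" "x \<le> 2" and g: "0 \<le> g" "g < 1" and N: "2 ^ nf * g = real_of_int N"
  shows "1 \<le> FractionalPower x g n m nf l \<and>
         \<bar>FractionalPower x g n m nf l - x powr g\<bar> \<le> 1 / (4 * 2 ^ l)"
proof (cases "g = 0")
  case True then show ?thesis unfolding FractionalPower_def Let_def using x by simp
next
  case False
  define b where "b = max (max n nf) (max (nat \<lceil>5 * (real l + 2 * real m + ln (real nf))\<rceil>) 40)"
  have "0 \<le> ln (real nf)" by (cases "nf = 0") auto
  hence "real (5 * l) \<le> 5 * (real l + 2 * real m + ln (real nf))" by simp
  hence "5 * l \<le> b" unfolding b_def by linarith
  moreover have "40 \<le> b" "nf \<le> b" unfolding b_def by auto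
  ultimately have prec: "680 * real nf * 2 ^ l \<le> (2::real) ^ b" using precision_bound by blast
  have FP: "FractionalPower x g n m nf l = fp_loop (pow2roots x n m b) g b nf"
    unfolding FractionalPower_def Let_def b_def using g False by simp
  have "170 * real nf \<le> 680 * real nf * 2 ^ l" using mult_left_mono[of 1 "2 ^ l" "680 * real nf"] by simp
  hence "1 \<le> fp_loop (pow2roots x n m b) g b nf \<and>
     \<bar>fp_loop (pow2roots x n m b) g b nf - x powr (\<lfloor>2 ^ nf * g\<rfloor> / 2 ^ nf)\<bar>
       \<le> 85 / 2 ^ b * nf * x powr (\<lfloor>2 ^ nf * g\<rfloor> / 2 ^ nf)"
    using fp_loop_accuracy[OF x g, of "pow2roots x n m b" b nf nf] pow2roots_accuracy[OF x \<open>40 \<le> b\<close>] prec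
    by simp
  moreover have "real_of_int \<lfloor>2 ^ nf * g\<rfloor> / 2 ^ nf = g" using N by (simp add: field_simps)
  moreover have "x powr g \<le> 2" using x g powr_mono[of g 1 x] by simp
  hence "real nf * x powr g \<le> real nf * 2" by (intro mult_left_mono) auto
  hence "85 / 2 ^ b * nf * x powr g \<le> 170 * real nf / 2 ^ b" by (simp add: divide_simps)
  moreover have "170 * real nf / 2 ^ b \<le> 1 / (4 * 2 ^ l)" using prec by (simp add: divide_simps)
  ultimately show ?thesis using FP by simp
qed

section \<open>Fractional powers of numbers in [0, 1)\<close>

lemma inv_loop_residual_double_precision:
  assumes y: "1 < y" "y < 4"
  shows "1 - y * inv_loop y (2 * l) \<le> 7/2 / 2 ^ l"
proof -
  define s where "s = inv_loop y (2 * l)"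
  consider "l \<le> 1" | "l = 2" | "3 \<le> l" by linarith
  then have "1 - y * s \<le> 7/2 / 2 ^ l"
  proof cases
    case 1
    have "(2::real) ^ l \<le> 2 ^ 1" using 1 by (intro power_increasing) auto
    hence "1 \<le> 7/2 / (2::real) ^ l" by (simp add: divide_simps)
    moreover have "0 \<le> y * s" unfolding s_def using inv_loop_bounds[OF y] y by simp
    ultimately show ?thesis by linarith
  next
    case 2
    have "1 - y * s \<le> 1/2" unfolding s_def using 2 y by (intro inv_loop_residual_le_half) auto
    thus ?thesis using 2 by simp
  next
    case 3
    have pl: "(8::real) \<le> 2 ^ l" using power_increasing[of 3 l "2::real"] 3 by simp
    have "(2::real) ^ 6 \<le> 2 ^ (2 * l)" using 3 by (intro power_increasing) auto
    hence "y / 2 ^ (2 * l) \<le> 1/16" using y by (simp add: divide_simps)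
    hence "1 - y * s \<le> (1/2) ^ (2 * l) + 4 * (y / 2 ^ (2 * l))"
      unfolding s_def using 3 y by (intro inv_loop_residual_le) auto
    also have "\<dots> = (1 + 4 * y) / 2 ^ l / 2 ^ l"
      by (simp add: power_one_over add_divide_distrib power_mult_distrib mult_2 power_add)
    also have "\<dots> \<le> 17 / 2 ^ l / 2 ^ l" using y by (intro divide_right_mono) auto
    also have "\<dots> \<le> 7/2 / 2 ^ l" using pl by (intro divide_right_mono) (auto simp: divide_simps)
    finally show ?thesis .
  qed
  thus ?thesis unfolding s_def .
qed

lemma INV_accuracy:
  assumes y: "1 \<le> y" "y < 4"
  shows "0 \<le> INV y n 1 (2 * l)" "y * INV y n 1 (2 * l) \<le> 1" "1 - y * INV y n 1 (2 * l) \<le> 7/2 / 2 ^ l"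
proof (atomize (full), cases "y = 1")
  case False
  hence "1 < y" using y by simp
  thus "0 \<le> INV y n 1 (2 * l) \<and> y * INV y n 1 (2 * l) \<le> 1 \<and> 1 - y * INV y n 1 (2 * l) \<le> 7/2 / 2 ^ l"
    using inv_loop_bounds inv_loop_residual_double_precision y False unfolding INV_def by simp
qed (simp add: INV_def)

lemma normalizing_exponent:
  fixes w :: real
  assumes w: "0 < w" "w < 1"
  obtains K :: nat where "(THE k :: nat. 0 < k \<and> 2 ^ k * w \<ge> 1 \<and> 1 > 2 ^ (k - 1) * w) = K"
    "1 \<le> 2 ^ K * w" "2 ^ K * w < 2"
proof -
  obtain n :: nat where "1 / w < real n" using reals_Archimedean2 by blast
  also have "real n < 2 ^ n" by (rule of_nat_less_two_power)
  finally have ex: "1 \<le> 2 ^ n * w" using w by (simp add: divide_less_eq)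
  define K where "K = (LEAST k :: nat. 1 \<le> 2 ^ k * w)"
  have K1: "1 \<le> 2 ^ K * w" unfolding K_def by (rule LeastI[of _ n]) (rule ex)
  have below: "\<not> 1 \<le> 2 ^ k * w" if "k < K" for k using that unfolding K_def by (rule not_less_Least)
  have K0: "0 < K" using K1 w by (cases K) auto
  have K2: "2 ^ (K - 1) * w < 1" using below[of "K - 1"] K0 by simp
  have "(THE k :: nat. 0 < k \<and> 2 ^ k * w \<ge> 1 \<and> 1 > 2 ^ (k - 1) * w) = K"
  proof (rule the_equality)
    fix k assume k: "0 < k \<and> 2 ^ k * w \<ge> 1 \<and> 1 > 2 ^ (k - 1) * w"
    have "\<not> k < K" using below k by blast
    moreover have "\<not> K < k"
    proof
      assume "K < k"
      hence "(2::real) ^ K \<le> 2 ^ (k - 1)" by (intro power_increasing) auto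
      hence "2 ^ K * w \<le> 2 ^ (k - 1) * w" using w by (intro mult_right_mono) auto
      thus False using k K1 by linarith
    qed
    ultimately show "k = K" by simp
  qed (use K0 K1 K2 in simp)
  moreover have "(2::real) ^ K = 2 * 2 ^ (K - 1)" using K0 by (cases K) auto
  ultimately show thesis using that K1 K2 by simp
qed

lemma FractionalPower2_unfold:
  assumes w: "0 < w" "w < 1" and f: "0 < f" "f < 1"
  obtains K b :: nat where "1 \<le> 2 ^ K * w" "2 ^ K * w < 2" "l + 2 \<le> b"
    "FractionalPower2 w f n m nf l = trunc_bits b
       (2 powr (- real_of_int \<lfloor>real K * f\<rfloor>) * FractionalPower (2 ^ K * w) f n m nf l
        * INV (FractionalPower 2 (frac_part (real K * f)) n m nf l) n 1 (2 * l))"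
proof -
  obtain K where K: "(THE k :: nat. 0 < k \<and> 2 ^ k * w \<ge> 1 \<and> 1 > 2 ^ (k - 1) * w) = K"
    "1 \<le> 2 ^ K * w" "2 ^ K * w < 2" using normalizing_exponent w by blast
  define b where "b = max (max n nf) (max (nat \<lceil>2 * real l + 6 * real m + 2 * ln (real nf)\<rceil>) 40)"
  have "0 \<le> ln (real nf)" by (cases "nf = 0") auto
  hence "real (2 * l) \<le> 2 * real l + 6 * real m + 2 * ln (real nf)" by simp
  hence "l + 2 \<le> b" unfolding b_def by linarith
  moreover have "FractionalPower2 w f n m nf l = trunc_bits b
       (2 powr (- real_of_int \<lfloor>real K * f\<rfloor>) * FractionalPower (2 ^ K * w) f n m nf l
        * INV (FractionalPower 2 (frac_part (real K * f)) n m nf l) n 1 (2 * l))"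
    unfolding FractionalPower2_def Let_def b_def[symmetric] K(1) using w f by simp
  ultimately show thesis using that K(2,3) by blast
qed

lemma powr_eq_scaled_quotient:
  fixes x f :: real and K :: nat
  assumes "0 < x"
  shows "(x / 2 ^ K) powr f
    = 2 powr (- real_of_int \<lfloor>real K * f\<rfloor>) * (x powr f / 2 powr frac_part (real K * f))"
proof -
  have "(2 ^ K :: real) powr f = 2 powr (real K * f)" by (simp add: powr_realpow[symmetric] powr_powr)
  also have "\<dots> = 2 powr real_of_int \<lfloor>real K * f\<rfloor> * 2 powr frac_part (real K * f)"
    unfolding frac_part_def by (simp add: powr_add[symmetric])
  finally show ?thesis using assms by (simp add: powr_divide powr_minus divide_simps)
qed

lemma abs_mult_approx_inverse_le:
  fixes X Y y s z :: real
  assumes "0 \<le> X" "1 \<le> y" "1 \<le> Y" "0 \<le> s" "y * s \<le> 1"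
  shows "\<bar>z * s - X / Y\<bar> \<le> \<bar>z - X\<bar> + X * (1 - y * s) + X * \<bar>y - Y\<bar>"
proof -
  have "s \<le> 1" using assms mult_right_mono[of 1 y s] by simp
  hence "\<bar>z - X\<bar> * s \<le> \<bar>z - X\<bar>" using mult_left_mono[of s 1 "\<bar>z - X\<bar>"] by simp
  moreover have "\<bar>s - 1 / y\<bar> \<le> 1 - y * s"
  proof -
    have "\<bar>s - 1 / y\<bar> = (1 - y * s) / y" using assms by (simp add: field_simps abs_if)
    also have "\<dots> \<le> (1 - y * s) / 1" using assms by (intro divide_left_mono) auto
    finally show ?thesis by simp
  qed
  moreover have "\<bar>1 / y - 1 / Y\<bar> \<le> \<bar>y - Y\<bar>"
  proof -
    have "\<bar>1 / y - 1 / Y\<bar> = \<bar>y - Y\<bar> / (y * Y)" using assms by (simp add: divide_simps abs_minus_commute)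
    also have "\<dots> \<le> \<bar>y - Y\<bar> / 1"
      using assms mult_mono[of 1 y 1 Y] by (intro divide_left_mono) auto
    finally show ?thesis by simp
  qed
  moreover have "z * s - X / Y = (z - X) * s + X * (s - 1 / y) + X * (1 / y - 1 / Y)"
    by (simp add: algebra_simps)
  ultimately show ?thesis using assms
    abs_triangle_ineq[of "(z - X) * s + X * (s - 1 / y)" "X * (1 / y - 1 / Y)"]
    abs_triangle_ineq[of "(z - X) * s" "X * (s - 1 / y)"]
    mult_left_mono[of "\<bar>s - 1 / y\<bar>" "1 - y * s" X] mult_left_mono[of "\<bar>1 / y - 1 / Y\<bar>" "\<bar>y - Y\<bar>" X]
    by (simp add: abs_mult)
qed

lemma abs_mult_INV_diff_le:
  assumes X: "0 \<le> X" "X \<le> 2" and Y: "1 \<le> Y" "Y < 2"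
    and z: "\<bar>z - X\<bar> \<le> 1 / (4 * 2 ^ l)" and y: "1 \<le> y" "\<bar>y - Y\<bar> \<le> 1 / (4 * 2 ^ l)"
  shows "\<bar>z * INV y n 1 (2 * l) - X / Y\<bar> \<le> 31/4 / 2 ^ l"
proof -
  define s where "s = INV y n 1 (2 * l)"
  have "1 / (4 * 2 ^ l) \<le> (1::real) / 4" by (simp add: divide_simps)
  hence "y < 4" using y Y by linarith
  hence s: "0 \<le> s" "y * s \<le> 1" "1 - y * s \<le> 7/2 / 2 ^ l"
    using INV_accuracy[of y n l] y unfolding s_def by auto
  have "\<bar>z * s - X / Y\<bar> \<le> \<bar>z - X\<bar> + X * (1 - y * s) + X * \<bar>y - Y\<bar>"
    using abs_mult_approx_inverse_le X y Y s by blast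
  also have "\<dots> \<le> 1 / (4 * 2 ^ l) + 2 * (7/2 / 2 ^ l) + 2 * (1 / (4 * 2 ^ l))"
    using X z s y by (intro add_mono mult_mono) auto
  finally show ?thesis unfolding s_def by (simp add: divide_simps)
qed

lemma FractionalPower2_accuracy:
  assumes w: "0 < w" "w < 1" and f: "0 < f" "f < 1" "frac_repr nf f"
  shows "\<bar>FractionalPower2 w f n m nf l - w powr f\<bar> \<le> 8 / 2 ^ l"
proof -
  obtain K b :: nat where x: "1 \<le> 2 ^ K * w" "2 ^ K * w < 2" and b: "l + 2 \<le> b" and E:
    "FractionalPower2 w f n m nf l = trunc_bits b
       (2 powr (- real_of_int \<lfloor>real K * f\<rfloor>) * FractionalPower (2 ^ K * w) f n m nf l
        * INV (FractionalPower 2 (frac_part (real K * f)) n m nf l) n 1 (2 * l))"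
    by (rule FractionalPower2_unfold[OF w f(1,2)])
  have "f \<noteq> 1" using f by simp
  then obtain N where N: "2 ^ nf * f = real_of_int N" by (rule frac_repr_dyadic[OF f(3)])
  define x where "x = 2 ^ K * w"
  define c where "c = real K * f"
  define zh where "zh = FractionalPower x f n m nf l"
  define yh where "yh = FractionalPower 2 (frac_part c) n m nf l"
  define q where "q = 2 powr (- real_of_int \<lfloor>c\<rfloor>)"
  define X where "X = x powr f"
  define Y where "Y = 2 powr frac_part c"
  have fc: "0 \<le> frac_part c" "frac_part c < 1" unfolding frac_part_def by linarith+
  have "2 ^ nf * frac_part c = real_of_int (int K * N - 2 ^ nf * \<lfloor>c\<rfloor>)"
    using N unfolding frac_part_def c_def by (simp add: algebra_simps)
  hence "1 \<le> yh \<and> \<bar>yh - Y\<bar> \<le> 1 / (4 * 2 ^ l)" unfolding yh_def Y_def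
    by (intro FractionalPower_accuracy[where N = "int K * N - 2 ^ nf * \<lfloor>c\<rfloor>"]) (use fc in auto)
  hence yh: "1 \<le> yh" "\<bar>yh - Y\<bar> \<le> 1 / (4 * 2 ^ l)" by auto
  have zh: "\<bar>zh - X\<bar> \<le> 1 / (4 * 2 ^ l)"
    using FractionalPower_accuracy[of x f] x f N unfolding zh_def X_def x_def by auto
  have X: "0 \<le> X" "X \<le> 2" unfolding X_def using x f powr_mono[of f 1 x] by (auto simp: x_def)
  have Y: "1 \<le> Y" "Y < 2" unfolding Y_def using fc powr_less_mono[of "frac_part c" 1 2]
    by (auto simp: ge_one_powr_ge_zero)
  define sh where "sh = INV yh n 1 (2 * l)"
  have quotient: "\<bar>zh * sh - X / Y\<bar> \<le> 31/4 / 2 ^ l"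
    unfolding sh_def using abs_mult_INV_diff_le X Y zh yh by blast
  have "0 \<le> \<lfloor>c\<rfloor>" unfolding c_def using f by simp
  hence "q \<le> 2 powr 0" unfolding q_def by (intro powr_mono) auto
  hence q: "0 < q" "q \<le> 1" unfolding q_def by auto
  have "w powr f = q * (X / Y)"
    using powr_eq_scaled_quotient[of x K f] x unfolding q_def X_def Y_def c_def x_def by simp
  hence "q * zh * sh - w powr f = q * (zh * sh - X / Y)" by (simp add: algebra_simps)
  hence "\<bar>q * zh * sh - w powr f\<bar> = q * \<bar>zh * sh - X / Y\<bar>" using q by (simp add: abs_mult)
  also have "\<dots> \<le> 31/4 / 2 ^ l" using q quotient mult_mono[of q 1 _ "31/4 / 2 ^ l"] by simp
  finally have "\<bar>q * zh * sh - w powr f\<bar> \<le> 31/4 / 2 ^ l" .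
  moreover have "(2::real) ^ (l + 2) \<le> 2 ^ b" using b by (intro power_increasing) auto
  hence "1 / 2 ^ b \<le> (1::real) / 4 / 2 ^ l" by (simp add: divide_simps power_add)
  moreover have "FractionalPower2 w f n m nf l = trunc_bits b (q * zh * sh)"
    unfolding E q_def zh_def sh_def yh_def x_def c_def ..
  ultimately show ?thesis using abs_trunc_bits_diff_le[of b "q * zh * sh"] by linarith
qed

theorem theorem5:
  fixes n m nf l :: nat and w f :: real
  assumes "0 \<le> w" and "w < 1" and "fixed_repr n m w"
    and "0 \<le> f" and "f \<le> 1" and "frac_repr nf f"
  shows "\<bar>FractionalPower2 w f n m nf l - w powr f\<bar> \<le> 1 / 2 powr (real l - 3)"
proof -
  have target: "1 / 2 powr (real l - 3) = 8 / 2 ^ l" by (simp add: powr_diff powr_realpow)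
  consider "w = 0 \<or> f = 0 \<or> f = 1" | "0 < w" "0 < f" "f < 1" using assms by fastforce
  then show ?thesis
  proof cases
    case 1 then show ?thesis unfolding FractionalPower2_def target using assms by auto
  next
    case 2 then show ?thesis unfolding target using FractionalPower2_accuracy assms by blast
  qed
qed

end
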